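(* Let $A_1,\ldots,A_n$ be events in a probability space, let $X$ be the number of these events that occur, and let $S_{k+1}=\sum_{1\le i_1<\cdots<i_{k+1}\le n}P(A_{i_1}\cdots A_{i_{k+1}})$. For integers $i,k$ with $1\le i\le k$ and $k+1\le n$, $$E\left[\binom{X-i}{k+1-i}\right]\ge\frac{\binom{k+1}{i}}{\binom{n}{i}}S_{k+1}.$$
   Context: Binomial convention: for integers $s,t$, $\binom{t}{s}=0$ if $\min(s,t)<0$ or $s>t$; otherwise $\binom{t}{s}=\frac{t!}{s!(t-s)!}$. $A_{i_1}\cdots A_{i_j}$ denotes the intersection of the events. *)

theory Defs
  imports "HOL-Probability.Probability"
begin

definition binom :: "int \<Rightarrow> int \<Rightarrow> int" where
  "binom t s = (if min s t < 0 \<or> s > t then 0 else int (nat t choose nat s))"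

end

theory Submission
  imports Defs
begin

(* Counting the (k+1)-subsets of the events that occur gives the classical identity
   E[C(X, k+1)] = S_(k+1).  Pointwise, C(x, k+1) C(k+1, i) = C(x, i) C(x-i, k+1-i) and
   C(x, i) <= C(n, i) for x <= n, so C(k+1, i) / C(n, i) * C(X, k+1) <= C(X-i, k+1-i);
   taking expectations gives the inequality. *)

lemma binom_of_nat: "binom (int a) (int b) = int (a choose b)"
  unfolding binom_def by (auto simp: binomial_eq_0)

lemma binom_diff_of_nat:
  assumes "i < m"
  shows "binom (int x - int i) (int m - int i) = int ((x - i) choose (m - i))"
proof (cases "i \<le> x")
  case True
  then have "int x - int i = int (x - i)" "int m - int i = int (m - i)"
    using assms by simp_all
  then show ?thesis
    by (simp only: binom_of_nat)
next
  case False
  then show ?thesis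
    using assms unfolding binom_def by simp
qed

lemma choose_mult':
  assumes "i \<le> m"
  shows "(x choose m) * (m choose i) = (x choose i) * ((x - i) choose (m - i))"
proof (cases "m \<le> x")
  case True
  then show ?thesis using choose_mult[OF assms] by simp
next
  case False
  then have "x choose i = 0 \<or> (x - i) choose (m - i) = 0"
    by (cases "i \<le> x") auto
  moreover have "x choose m = 0"
    using False by (simp add: binomial_eq_0)
  ultimately show ?thesis
    by (metis mult_0 mult_0_right)
qed

lemma choose_ratio_le:
  assumes "x \<le> n" "i \<le> m"
  shows "real (m choose i) / real (n choose i) * real (x choose m)
           \<le> real ((x - i) choose (m - i))"
proof -
  have "real (m choose i) / real (n choose i) * real (x choose m)
          = real (x choose i) / real (n choose i) * real ((x - i) choose (m - i))"
    using choose_mult'[OF assms(2), of x]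
    by (simp add: field_simps flip: of_nat_mult)
  also have "\<dots> \<le> real ((x - i) choose (m - i))"
    using binomial_right_mono[OF assms(1), of i]
    by (intro mult_left_le_one_le) (auto simp: divide_le_eq_1)
  finally show ?thesis .
qed

lemma sum_indicator_Inter_subsets:
  assumes "finite J"
  shows "(\<Sum>I \<in> {I. I \<subseteq> J \<and> card I = m}. indicator (\<Inter>j\<in>I. A j) \<omega> :: real)
           = real (card {j \<in> J. \<omega> \<in> A j} choose m)"
proof -
  let ?F = "{I. I \<subseteq> J \<and> card I = m}"
  have "finite ?F"
    by (rule finite_subset[of _ "Pow J"]) (use assms in auto)
  then have "(\<Sum>I \<in> ?F. indicator (\<Inter>j\<in>I. A j) \<omega> :: real)
               = real (card (?F \<inter> {I. \<omega> \<in> (\<Inter>j\<in>I. A j)}))"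
    by (simp add: indicator_def sum.If_cases)
  also have "?F \<inter> {I. \<omega> \<in> (\<Inter>j\<in>I. A j)} = {I. I \<subseteq> {j \<in> J. \<omega> \<in> A j} \<and> card I = m}"
    by blast
  also have "card \<dots> = card {j \<in> J. \<omega> \<in> A j} choose m"
    using assms by (intro n_subsets) simp
  finally show ?thesis .
qed

lemma measurable_card_events:
  assumes "finite J" "\<And>j. j \<in> J \<Longrightarrow> A j \<in> sets M"
  shows "(\<lambda>\<omega>. card {j \<in> J. \<omega> \<in> A j}) \<in> M \<rightarrow>\<^sub>M count_space UNIV"
proof -
  have "(\<Sum>j\<in>J. indicator (A j) \<omega> :: real) = real (card {j \<in> J. \<omega> \<in> A j})" for \<omega>
    using assms(1) by (simp add: indicator_def sum.If_cases Int_def conj_commute)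
  then have "card {j \<in> J. \<omega> \<in> A j} = nat \<lfloor>\<Sum>j\<in>J. indicator (A j) \<omega> :: real\<rfloor>" for \<omega>
    by simp
  then show ?thesis
    using assms by simp measurable
qed

lemma (in prob_space) integrable_card_events:
  fixes h :: "nat \<Rightarrow> real"
  assumes "finite J" "\<And>j. j \<in> J \<Longrightarrow> A j \<in> events"
  shows "integrable M (\<lambda>\<omega>. h (card {j \<in> J. \<omega> \<in> A j}))"
proof (rule finite_borel_measurable_integrable)
  show "(\<lambda>\<omega>. h (card {j \<in> J. \<omega> \<in> A j})) \<in> borel_measurable M"
    using measurable_card_events[OF assms] by measurable
  have "card {j \<in> J. \<omega> \<in> A j} \<le> card J" for \<omega>
    using assms(1) by (intro card_mono) auto
  then have "(\<lambda>\<omega>. h (card {j \<in> J. \<omega> \<in> A j})) ` space M \<subseteq> h ` {..card J}"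
    by auto
  then show "finite ((\<lambda>\<omega>. h (card {j \<in> J. \<omega> \<in> A j})) ` space M)"
    by (rule finite_subset) simp
qed

text \<open>For \<open>m = 0\<close> the identity fails in general: the empty intersection is \<open>UNIV\<close>,
  which need not be an event.\<close>
lemma (in prob_space) expectation_choose_card_events:
  assumes "finite J" "\<And>j. j \<in> J \<Longrightarrow> A j \<in> events" "0 < m"
  shows "expectation (\<lambda>\<omega>. real (card {j \<in> J. \<omega> \<in> A j} choose m))
           = (\<Sum>I \<in> {I. I \<subseteq> J \<and> card I = m}. prob (\<Inter>j\<in>I. A j))"
proof -
  let ?F = "{I. I \<subseteq> J \<and> card I = m}"
  have events: "(\<Inter>j\<in>I. A j) \<in> events" if "I \<in> ?F" for I
  proof -
    from that assms have "finite I" "I \<noteq> {}"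
      by (auto intro: finite_subset)
    with that assms(2) show ?thesis
      by (intro sets.finite_INT) auto
  qed
  have "expectation (\<lambda>\<omega>. real (card {j \<in> J. \<omega> \<in> A j} choose m))
          = expectation (\<lambda>\<omega>. \<Sum>I \<in> ?F. indicator (\<Inter>j\<in>I. A j) \<omega>)"
    by (simp only: sum_indicator_Inter_subsets[OF assms(1)])
  also have "\<dots> = (\<Sum>I \<in> ?F. expectation (indicator (\<Inter>j\<in>I. A j)))"
    using events
    by (intro Bochner_Integration.integral_sum integrable_real_indicator)
      (simp_all add: less_top[symmetric])
  also have "\<dots> = (\<Sum>I \<in> ?F. prob (\<Inter>j\<in>I. A j))"
    using events by (simp add: Int_absorb2 sets.sets_into_space)
  finally show ?thesis .
qed

theorem lemma3:
  fixes M :: "'a measure" and A :: "nat \<Rightarrow> 'a set" and n i k :: nat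
  assumes "prob_space M"
    and "\<And>j. j \<in> {1..n} \<Longrightarrow> A j \<in> sets M"
    and "1 \<le> i" and "i \<le> k" and "k + 1 \<le> n"
  defines "X \<equiv> (\<lambda>\<omega>. card {j \<in> {1..n}. \<omega> \<in> A j})"
    and "S \<equiv> (\<Sum>I \<in> {I. I \<subseteq> {1..n} \<and> card I = k + 1}. measure M (\<Inter>j\<in>I. A j))"
  shows "(\<integral>\<omega>. real_of_int (binom (int (X \<omega>) - int i) (int (k + 1) - int i)) \<partial>M)
           \<ge> real ((k + 1) choose i) / real (n choose i) * S"
proof -
  interpret prob_space M by fact
  let ?c = "real ((k + 1) choose i) / real (n choose i)"
  have "X \<omega> \<le> n" for \<omega>
    unfolding X_def by (rule order_trans[OF card_mono[of "{1..n}"]]) auto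
  then have pointwise: "?c * real (X \<omega> choose (k + 1)) \<le> real ((X \<omega> - i) choose (k + 1 - i))" for \<omega>
    using assms(4) by (intro choose_ratio_le) simp_all
  have integrable: "integrable M (\<lambda>\<omega>. h (X \<omega>))" for h :: "nat \<Rightarrow> real"
    unfolding X_def by (rule integrable_card_events) (use assms(2) in auto)
  have "expectation (\<lambda>\<omega>. real (X \<omega> choose (k + 1))) = S"
    unfolding S_def X_def by (rule expectation_choose_card_events) (use assms(2) in auto)
  then have "?c * S = expectation (\<lambda>\<omega>. ?c * real (X \<omega> choose (k + 1)))"
    by simp
  also have "\<dots> \<le> expectation (\<lambda>\<omega>. real ((X \<omega> - i) choose (k + 1 - i)))"
    by (rule integral_mono[OF integrable[of "\<lambda>x. ?c * real (x choose (k + 1))"]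
          integrable[of "\<lambda>x. real ((x - i) choose (k + 1 - i))"] pointwise])
  also have "\<dots> = (\<integral>\<omega>. real_of_int (binom (int (X \<omega>) - int i) (int (k + 1) - int i)) \<partial>M)"
    using assms(4) by (simp add: binom_diff_of_nat del: of_nat_Suc)
  finally show ?thesis .
qed

end
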